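(* Let $\mathcal H=\mathbb C^4$ with orthonormal basis $|0\rangle,|1\rangle,|2\rangle,|3\rangle$, let $0<p<\tfrac12$, $|\nu^\pm\rangle=\tfrac12(\pm|0\rangle+|1\rangle\pm|2\rangle+|3\rangle)$, and $\rho_1=p|0\rangle\langle0|+(1-p)|1\rangle\langle1|$, $\rho_2=p|\nu^+\rangle\langle\nu^+|+(1-p)|\nu^-\rangle\langle\nu^-|$. Then $\rho_1$ and $\rho_2$ have the same spectrum and all Jordan angles between $\operatorname{supp}\rho_1$ and $\operatorname{supp}\rho_2$ are equal, but the set $\{\rho_1,\rho_2\}$ is not essentially pure.
   Context: $\operatorname{supp}\rho$ is the orthogonal complement of the kernel of $\rho$; Jordan angles are the principal (canonical) angles between two subspaces. A set $\mathcal M$ of density operators on $\mathcal H$ is essentially pure if there exist finite-dimensional Hilbert spaces $\mathcal H_C,\mathcal H_A,\mathcal H_B$ with $\mathcal H\otimes\mathcal H_C\cong\mathcal H_A\otimes\mathcal H_B$, density operators $\sigma_B$ on $\mathcal H_B$, $\omega_C$ on $\mathcal H_C$ and a unitary $U$ (from $\mathcal H_A\otimes\mathcal H_B$ to $\mathcal H\otimes\mathcal H_C$) such that $\{\rho\otimes\omega_C\mid\rho\in\mathcal M\}\subseteq\{U(|\phi\rangle\langle\phi|\otimes\sigma_B)U^\dagger\mid|\phi\rangle\in\mathcal H_A,\ \|\phi\|=1\}$. *)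

theory Defs
  imports "Jordan_Normal_Form.Jordan_Normal_Form" "Jordan_Normal_Form.Spectral_Radius"
    "Jordan_Normal_Form.Schur_Decomposition" "Jordan_Normal_Form.Matrix_Kernel"
begin

text \<open>Finite-dimensional Hilbert spaces are modelled as complex n-vectors
  (carrier_vec n) with inner product given by the conjugated scalar product.\<close>

definition mtrace :: "complex mat \<Rightarrow> complex" where
  "mtrace A = (\<Sum>i < dim_row A. A $$ (i,i))"

definition density_op :: "nat \<Rightarrow> complex mat \<Rightarrow> bool" where
  "density_op n \<rho> \<longleftrightarrow> \<rho> \<in> carrier_mat n n \<and> mat_adjoint \<rho> = \<rho> \<and>
     (\<forall>v \<in> carrier_vec n. 0 \<le> Re ((\<rho> *\<^sub>v v) \<bullet>c v)) \<and> mtrace \<rho> = 1"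

definition unitary_op :: "nat \<Rightarrow> complex mat \<Rightarrow> bool" where
  "unitary_op n U \<longleftrightarrow> U \<in> carrier_mat n n \<and> mat_adjoint U * U = 1\<^sub>m n \<and> U * mat_adjoint U = 1\<^sub>m n"

definition ketbra :: "complex vec \<Rightarrow> complex mat" where
  "ketbra v = mat (dim_vec v) (dim_vec v) (\<lambda>(i,j). v $ i * cnj (v $ j))"

text \<open>Kronecker (tensor) product of matrices, w.r.t. the product basis
  |i>|j> \<mapsto> index i * dimB + j.\<close>
definition kron :: "complex mat \<Rightarrow> complex mat \<Rightarrow> complex mat" where
  "kron A B = mat (dim_row A * dim_row B) (dim_col A * dim_col B)
     (\<lambda>(i,j). A $$ (i div dim_row B, j div dim_col B) * B $$ (i mod dim_row B, j mod dim_col B))"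

definition supp :: "complex mat \<Rightarrow> complex vec set" where
  "supp \<rho> = {v \<in> carrier_vec (dim_col \<rho>). \<forall>w \<in> mat_kernel \<rho>. v \<bullet>c w = 0}"

definition is_onb :: "nat \<Rightarrow> complex vec set \<Rightarrow> complex vec list \<Rightarrow> bool" where
  "is_onb n S vs \<longleftrightarrow> set vs \<subseteq> S \<and> S \<subseteq> carrier_vec n \<and>
     (\<forall>i < length vs. \<forall>j < length vs. vs ! i \<bullet>c vs ! j = (if i = j then 1 else 0)) \<and>
     (\<forall>v \<in> S. \<exists>c \<in> carrier_vec (length vs). v = mat_of_cols n vs *\<^sub>v c)"

text \<open>Jordan (principal) angles between subspaces S, T of C^n:
  with orthonormal basis matrices Q_S (n x k), Q_T (n x l) and G = Q_S^* Q_T,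
  the cosines of the min(k,l) Jordan angles are the singular values of G, i.e.
  the square roots of the eigenvalues of G G^* (if k \<le> l) resp. G^* G (if l < k).\<close>
definition jordan_angles :: "nat \<Rightarrow> complex vec set \<Rightarrow> complex vec set \<Rightarrow> real set" where
  "jordan_angles n S T =
     (let QS = mat_of_cols n (SOME vs. is_onb n S vs);
          QT = mat_of_cols n (SOME vs. is_onb n T vs);
          G = mat_adjoint QS * QT;
          M = (if dim_col QS \<le> dim_col QT then G * mat_adjoint G else mat_adjoint G * G)
      in {arccos (sqrt (Re ev)) | ev. eigenvalue M ev})"

definition essentially_pure :: "nat \<Rightarrow> complex mat set \<Rightarrow> bool" where
  "essentially_pure n \<M> \<longleftrightarrow>
     (\<exists>dC dA dB \<sigma>B \<omega>C U.
        n * dC = dA * dB \<and> density_op dB \<sigma>B \<and> density_op dC \<omega>C \<and> unitary_op (dA * dB) U \<and>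
        (\<forall>\<rho> \<in> \<M>. \<exists>\<phi> \<in> carrier_vec dA. \<phi> \<bullet>c \<phi> = 1 \<and>
            kron \<rho> \<omega>C = U * kron (ketbra \<phi>) \<sigma>B * mat_adjoint U))"

definition nu_plus :: "complex vec" where
  "nu_plus = (1/2) \<cdot>\<^sub>v vec_of_list [1, 1, 1, 1]"

definition nu_minus :: "complex vec" where
  "nu_minus = (1/2) \<cdot>\<^sub>v vec_of_list [-1, 1, -1, 1]"

definition rho1 :: "real \<Rightarrow> complex mat" where
  "rho1 p = of_real p \<cdot>\<^sub>m ketbra (unit_vec 4 0) + of_real (1 - p) \<cdot>\<^sub>m ketbra (unit_vec 4 1)"

definition rho2 :: "real \<Rightarrow> complex mat" where
  "rho2 p = of_real p \<cdot>\<^sub>m ketbra nu_plus + of_real (1 - p) \<cdot>\<^sub>m ketbra nu_minus"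

end

theory Submission
  imports Defs
begin

text \<open>
  Both states are diagonal in orthonormal pairs: \<open>\<rho>\<^sub>1\<close> in \<open>|0>, |1>\<close> and \<open>\<rho>\<^sub>2\<close> in
  \<open>|\<nu>\<^sup>+>, |\<nu>\<^sup>->\<close>, with the same weights \<open>p, 1 - p\<close>; a change of basis taking one pair
  to the other makes them similar, so spectra and characteristic polynomials agree.
  Their supports are the ranges of the projections \<open>P\<^sub>1, P\<^sub>2\<close> onto these pairs, and
  \<open>P\<^sub>1 P\<^sub>2 P\<^sub>1 = P\<^sub>1 / 2\<close>, \<open>P\<^sub>2 P\<^sub>1 P\<^sub>2 = P\<^sub>2 / 2\<close>. For orthonormal basis matrices
  \<open>Q\<^sub>i\<close> with \<open>Q\<^sub>i Q\<^sub>i\<^sup>* = P\<^sub>i\<close> this makes \<open>G G\<^sup>* = 1/2\<close> for \<open>G = Q\<^sub>1\<^sup>* Q\<^sub>2\<close>, so every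
  Jordan angle is \<open>\<pi>/4\<close>.

  If \<open>\<rho> \<otimes> \<omega> = U (|\<phi>><\<phi>| \<otimes> \<sigma>) U\<^sup>*\<close> for all \<open>\<rho>\<close> in a set \<open>M\<close>, then from
  \<open>|\<phi>><\<phi>|\<psi>><\<psi>|\<phi>><\<phi>| = |<\<phi>|\<psi>>|\<^sup>2 |\<phi>><\<phi>|\<close> one gets
  \<open>\<rho>\<rho>'\<rho> \<otimes> \<omega>\<^sup>3 = c (\<rho>\<^sup>3 \<otimes> \<omega>\<^sup>3)\<close>, and since the Hermitian \<open>\<omega> \<noteq> 0\<close> has \<open>\<omega>\<^sup>3 \<noteq> 0\<close>,
  \<open>\<rho>\<rho>'\<rho> = c \<rho>\<^sup>3\<close> for all \<open>\<rho>, \<rho>' \<in> M\<close>. But \<open>\<rho>\<^sub>1\<^sup>3\<close> is diagonal while the \<open>(0,1)\<close> entry of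
  \<open>\<rho>\<^sub>1\<rho>\<^sub>2\<rho>\<^sub>1\<close> is \<open>p(1 - p)(2p - 1)/4 \<noteq> 0\<close>.
\<close>

section \<open>Adjoints and Kronecker products\<close>

lemma mat_adjoint_eq:
  "mat_adjoint (A :: complex mat) = mat (dim_col A) (dim_row A) (\<lambda>(i, j). cnj (A $$ (j, i)))"
  unfolding mat_adjoint_def mat_of_rows_def by (rule eq_matI) auto

lemma mat_adjoint_dim [simp]:
  "dim_row (mat_adjoint (A :: complex mat)) = dim_col A"
  "dim_col (mat_adjoint A) = dim_row A"
  by (simp_all add: mat_adjoint_eq)

lemma mat_adjoint_index [simp]:
  "i < dim_col A \<Longrightarrow> j < dim_row A \<Longrightarrow> mat_adjoint (A :: complex mat) $$ (i, j) = cnj (A $$ (j, i))"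
  by (simp add: mat_adjoint_eq)

lemma mat_adjoint_carrier [simp]:
  "A \<in> carrier_mat n m \<Longrightarrow> mat_adjoint (A :: complex mat) \<in> carrier_mat m n"
  by (intro carrier_matI) (simp_all add: carrier_matD)

lemma mat_adjoint_mat_adjoint [simp]: "mat_adjoint (mat_adjoint (A :: complex mat)) = A"
  by (rule eq_matI) auto

lemma mat_adjoint_mult:
  assumes "A \<in> carrier_mat n m" "B \<in> carrier_mat m k"
  shows "mat_adjoint ((A :: complex mat) * B) = mat_adjoint B * mat_adjoint A"
proof (rule eq_matI)
  fix i j assume "i < dim_row (mat_adjoint B * mat_adjoint A)" "j < dim_col (mat_adjoint B * mat_adjoint A)"
  with assms have ij: "i < k" "j < n" by auto
  have "mat_adjoint (A * B) $$ (i, j) = cnj (\<Sum>l\<in>{0..<m}. A $$ (j, l) * B $$ (l, i))"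
    using assms ij by (simp add: scalar_prod_def)
  also have "\<dots> = (\<Sum>l\<in>{0..<m}. cnj (B $$ (l, i)) * cnj (A $$ (j, l)))"
    by (simp add: cnj_sum mult.commute)
  also have "\<dots> = (mat_adjoint B * mat_adjoint A) $$ (i, j)"
    using assms ij by (simp add: scalar_prod_def)
  finally show "mat_adjoint (A * B) $$ (i, j) = (mat_adjoint B * mat_adjoint A) $$ (i, j)" .
qed (use assms in auto)

lemma mat_adjoint_scalar_prod:
  assumes "A \<in> carrier_mat n m" "v \<in> carrier_vec m" "w \<in> carrier_vec n"
  shows "((A :: complex mat) *\<^sub>v v) \<bullet>c w = v \<bullet>c (mat_adjoint A *\<^sub>v w)"
proof -
  have "(A *\<^sub>v v) \<bullet>c w = (\<Sum>i<n. (\<Sum>k<m. A $$ (i, k) * v $ k) * cnj (w $ i))"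
    using assms by (simp add: scalar_prod_def atLeast0LessThan)
  also have "\<dots> = (\<Sum>i<n. \<Sum>k<m. v $ k * (A $$ (i, k) * cnj (w $ i)))"
    by (simp add: sum_distrib_left sum_distrib_right mult_ac)
  also have "\<dots> = (\<Sum>k<m. \<Sum>i<n. v $ k * (A $$ (i, k) * cnj (w $ i)))"
    by (rule sum.swap)
  also have "\<dots> = v \<bullet>c (mat_adjoint A *\<^sub>v w)"
    using assms by (simp add: scalar_prod_def atLeast0LessThan cnj_sum sum_distrib_left mult_ac)
  finally show ?thesis .
qed

lemma eq_mat_on_vecI:
  assumes "A \<in> carrier_mat n m" "B \<in> carrier_mat n m"
    and "\<And>v. v \<in> carrier_vec m \<Longrightarrow> A *\<^sub>v v = B *\<^sub>v v"
  shows "A = (B :: 'a :: semiring_1 mat)"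
proof (rule eq_matI)
  fix i j assume ij: "i < dim_row B" "j < dim_col B"
  have "A $$ (i, j) = (A *\<^sub>v unit_vec m j) $ i" "B $$ (i, j) = (B *\<^sub>v unit_vec m j) $ i"
    using ij assms(1,2) by auto
  then show "A $$ (i, j) = B $$ (i, j)" using assms(3)[of "unit_vec m j"] by simp
qed (use assms in auto)

lemma hermitian_square_eq_0:
  assumes "A \<in> carrier_mat n n" "mat_adjoint A = A" "A * A = 0\<^sub>m n n"
  shows "A = (0\<^sub>m n n :: complex mat)"
proof (rule eq_matI)
  fix i j assume "i < dim_row (0\<^sub>m n n :: complex mat)" "j < dim_col (0\<^sub>m n n :: complex mat)"
  then have ij: "i < n" "j < n" by auto
  have "col A j \<bullet>c col A j = (mat_adjoint A * A) $$ (j, j)"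
    using assms(1) ij by (simp add: scalar_prod_def mult.commute)
  also have "\<dots> = 0" using assms(2,3) ij by simp
  finally have "col A j = 0\<^sub>v n"
    using conjugate_square_eq_0_vec[of "col A j" n] assms(1) ij by simp
  then have "col A j $ i = 0" using ij by simp
  then show "A $$ (i, j) = 0\<^sub>m n n $$ (i, j)" using assms(1) ij by simp
qed (use assms in auto)

lemma hermitian_cube_neq_0:
  assumes A: "A \<in> carrier_mat n n" and "mat_adjoint A = A" "A \<noteq> (0\<^sub>m n n :: complex mat)"
  shows "A * A * A \<noteq> 0\<^sub>m n n"
proof
  assume "A * A * A = 0\<^sub>m n n"
  moreover have "(A * A) * (A * A) = (A * A * A) * A"
    using A by (metis assoc_mult_mat mult_carrier_mat)
  ultimately have "(A * A) * (A * A) = 0\<^sub>m n n"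
    using A by simp
  moreover have "mat_adjoint (A * A) = A * A"
    using mat_adjoint_mult[OF A A] assms(2) by simp
  ultimately have "A * A = 0\<^sub>m n n"
    using hermitian_square_eq_0[OF mult_carrier_mat[OF A A]] by blast
  then show False using hermitian_square_eq_0[OF A assms(2)] assms(3) by blast
qed

lemma sum_mult_nat_split:
  "(\<Sum>k\<in>{0..<b * d}. g k) = (\<Sum>x\<in>{0..<b}. \<Sum>y\<in>{0..<d}. g (x * d + y :: nat))"
proof (induction b)
  case (Suc b)
  have "{0..<Suc b * d} = {0..<b * d} \<union> {b * d..<b * d + d}" by auto
  then have "(\<Sum>k\<in>{0..<Suc b * d}. g k) = (\<Sum>k\<in>{0..<b * d}. g k) + (\<Sum>k\<in>{b * d..<b * d + d}. g k)"
    by (simp add: sum.union_disjoint)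
  also have "(\<Sum>k\<in>{b * d..<b * d + d}. g k) = (\<Sum>y\<in>{0..<d}. g (y + b * d))"
    by (metis add.commute add_0 sum.shift_bounds_nat_ivl)
  also have "\<dots> = (\<Sum>y\<in>{0..<d}. g (b * d + y))"
    by (simp add: add.commute)
  finally show ?case by (simp add: Suc.IH)
qed simp

lemma kron_dim [simp]:
  "dim_row (kron A B) = dim_row A * dim_row B"
  "dim_col (kron A B) = dim_col A * dim_col B"
  by (simp_all add: kron_def)

lemma kron_carrier [simp]:
  "A \<in> carrier_mat a b \<Longrightarrow> B \<in> carrier_mat c d \<Longrightarrow> kron A B \<in> carrier_mat (a * c) (b * d)"
  by (intro carrier_matI) (simp_all add: carrier_matD)

lemma kron_index:
  "i < dim_row A * dim_row B \<Longrightarrow> j < dim_col A * dim_col B \<Longrightarrow>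
   kron A B $$ (i, j) = A $$ (i div dim_row B, j div dim_col B) * B $$ (i mod dim_row B, j mod dim_col B)"
  by (simp add: kron_def)

lemma kron_smult: "kron (c \<cdot>\<^sub>m A) B = c \<cdot>\<^sub>m kron A B"
  by (rule eq_matI) (auto simp: kron_def less_mult_imp_div_less)

lemma kron_mult:
  assumes "A \<in> carrier_mat a b" "B \<in> carrier_mat c d" "C \<in> carrier_mat b e" "D \<in> carrier_mat d f"
  shows "kron A B * kron C D = kron (A * C) (B * D)"
proof (rule eq_matI)
  fix i j assume "i < dim_row (kron (A * C) (B * D))" "j < dim_col (kron (A * C) (B * D))"
  with assms have i: "i < a * c" and j: "j < e * f" by auto
  then have "0 < c" "0 < f" by (metis mult_0_right not_less0 gr0I)+
  with i j have idx: "i div c < a" "j div f < e" "i mod c < c" "j mod f < f"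
    by (auto simp: less_mult_imp_div_less)
  have "(kron A B * kron C D) $$ (i, j) = (\<Sum>k\<in>{0..<b * d}. kron A B $$ (i, k) * kron C D $$ (k, j))"
    using assms i j by (simp add: scalar_prod_def)
  also have "\<dots> = (\<Sum>x\<in>{0..<b}. \<Sum>y\<in>{0..<d}. kron A B $$ (i, x * d + y) * kron C D $$ (x * d + y, j))"
    by (rule sum_mult_nat_split)
  also have "\<dots> = (\<Sum>x\<in>{0..<b}. \<Sum>y\<in>{0..<d}.
      (A $$ (i div c, x) * C $$ (x, j div f)) * (B $$ (i mod c, y) * D $$ (y, j mod f)))"
  proof (intro sum.cong refl)
    fix x y assume x: "x \<in> {0..<b}" and y: "y \<in> {0..<d}"
    have "x * d + y < (x + 1) * d" using y by simp
    also have "\<dots> \<le> b * d" using x by (intro mult_right_mono) auto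
    finally have "x * d + y < b * d" .
    moreover have "(x * d + y) div d = x" "(x * d + y) mod d = y" using y by auto
    ultimately show "kron A B $$ (i, x * d + y) * kron C D $$ (x * d + y, j) =
        (A $$ (i div c, x) * C $$ (x, j div f)) * (B $$ (i mod c, y) * D $$ (y, j mod f))"
      using assms i j by (simp add: kron_index mult_ac)
  qed
  also have "\<dots> = (\<Sum>x\<in>{0..<b}. A $$ (i div c, x) * C $$ (x, j div f)) *
      (\<Sum>y\<in>{0..<d}. B $$ (i mod c, y) * D $$ (y, j mod f))"
    by (simp add: sum_product)
  also have "\<dots> = kron (A * C) (B * D) $$ (i, j)"
    using assms i j idx by (simp add: kron_index scalar_prod_def)
  finally show "(kron A B * kron C D) $$ (i, j) = kron (A * C) (B * D) $$ (i, j)" .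
qed (use assms in auto)

lemma kron_sandwich:
  assumes "A \<in> carrier_mat n n" "B \<in> carrier_mat n n" "W \<in> carrier_mat d d"
  shows "kron A W * kron B W * kron A W = kron (A * B * A) (W * W * W)"
proof -
  have "kron A W * kron B W = kron (A * B) (W * W)"
    by (rule kron_mult[OF assms(1,3,2,3)])
  then show ?thesis
    using kron_mult[OF mult_carrier_mat[OF assms(1,2)] mult_carrier_mat[OF assms(3,3)] assms(1,3)]
    by simp
qed

lemma kron_eq_smult_kron_cancel:
  assumes A: "A \<in> carrier_mat n m" and B: "B \<in> carrier_mat n m"
    and W: "W \<in> carrier_mat d e" "W \<noteq> 0\<^sub>m d e"
    and eq: "kron A W = c \<cdot>\<^sub>m kron B W"
  shows "A = c \<cdot>\<^sub>m B"
proof -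
  obtain a b where ab: "a < d" "b < e" "W $$ (a, b) \<noteq> 0"
  proof -
    have "\<exists>a b. a < d \<and> b < e \<and> W $$ (a, b) \<noteq> 0"
    proof (rule ccontr)
      assume "\<not> ?thesis"
      then have "W = 0\<^sub>m d e" using W(1) by (intro eq_matI) auto
      with W(2) show False ..
    qed
    then show ?thesis using that by blast
  qed
  show ?thesis
  proof (rule eq_matI)
    fix i j assume "i < dim_row (c \<cdot>\<^sub>m B)" "j < dim_col (c \<cdot>\<^sub>m B)"
    with B have ij: "i < n" "j < m" by auto
    have "i * d + a < (i + 1) * d" "j * e + b < (j + 1) * e" using ab by auto
    moreover have "(i + 1) * d \<le> n * d" "(j + 1) * e \<le> m * e"
      using ij mult_le_mono1[of "i + 1" n d] mult_le_mono1[of "j + 1" m e] by simp_all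
    ultimately have idx: "i * d + a < n * d" "j * e + b < m * e" by linarith+
    have "A $$ (i, j) * W $$ (a, b) = kron A W $$ (i * d + a, j * e + b)"
      using A W idx ab by (simp add: kron_index)
    also have "\<dots> = c * B $$ (i, j) * W $$ (a, b)"
      using eq A B W idx ab by (simp add: kron_index)
    finally show "A $$ (i, j) = (c \<cdot>\<^sub>m B) $$ (i, j)"
      using ab ij B by simp
  qed (use A B in auto)
qed

lemma smult_smult_mat: "a \<cdot>\<^sub>m (b \<cdot>\<^sub>m A) = (a * b :: 'a :: comm_ring) \<cdot>\<^sub>m A"
  by (rule eq_matI) (auto simp: mult.assoc)

lemma one_smult_mat [simp]: "(1 :: 'a :: ring_1) \<cdot>\<^sub>m A = A"
  by (rule eq_matI) auto

definition outer :: "complex vec \<Rightarrow> complex vec \<Rightarrow> complex mat" where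
  "outer u v = mat (dim_vec u) (dim_vec v) (\<lambda>(i, j). u $ i * cnj (v $ j))"

lemma ketbra_eq_outer: "ketbra v = outer v v"
  by (simp add: ketbra_def outer_def)

lemma outer_carrier [simp]: "outer u v \<in> carrier_mat (dim_vec u) (dim_vec v)"
  by (simp add: outer_def)

lemma outer_mult:
  assumes "dim_vec b = n" "dim_vec c = n"
  shows "outer a b * outer c d = (c \<bullet>c b) \<cdot>\<^sub>m outer a d"
proof (rule eq_matI)
  fix i j assume "i < dim_row ((c \<bullet>c b) \<cdot>\<^sub>m outer a d)" "j < dim_col ((c \<bullet>c b) \<cdot>\<^sub>m outer a d)"
  then have ij: "i < dim_vec a" "j < dim_vec d" by (auto simp: outer_def)
  have "(outer a b * outer c d) $$ (i, j) = (\<Sum>k\<in>{0..<n}. a $ i * cnj (b $ k) * (c $ k * cnj (d $ j)))"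
    using ij assms by (simp add: outer_def scalar_prod_def)
  also have "\<dots> = (\<Sum>k\<in>{0..<n}. c $ k * cnj (b $ k)) * (a $ i * cnj (d $ j))"
    by (simp add: sum_distrib_left sum_distrib_right mult_ac)
  also have "\<dots> = ((c \<bullet>c b) \<cdot>\<^sub>m outer a d) $$ (i, j)"
    using ij assms by (simp add: outer_def scalar_prod_def)
  finally show "(outer a b * outer c d) $$ (i, j) = ((c \<bullet>c b) \<cdot>\<^sub>m outer a d) $$ (i, j)" .
qed (auto simp: outer_def)

lemma ketbra_carrier [simp]: "ketbra v \<in> carrier_mat (dim_vec v) (dim_vec v)"
  by (simp add: ketbra_def)

lemma ketbra_sandwich:
  assumes "dim_vec \<phi> = n" "dim_vec \<psi> = n"
  shows "ketbra \<phi> * ketbra \<psi> * ketbra \<phi> = ((\<psi> \<bullet>c \<phi>) * (\<phi> \<bullet>c \<psi>)) \<cdot>\<^sub>m ketbra \<phi>"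
proof -
  have "outer \<phi> \<psi> \<in> carrier_mat n n" "outer \<phi> \<phi> \<in> carrier_mat n n"
    using assms outer_carrier by metis+
  then have "ketbra \<phi> * ketbra \<psi> * ketbra \<phi> = (\<psi> \<bullet>c \<phi>) \<cdot>\<^sub>m (outer \<phi> \<psi> * outer \<phi> \<phi>)"
    using outer_mult[OF assms, of \<phi> \<psi>] assms by (simp add: ketbra_eq_outer mult_smult_assoc_mat)
  also have "outer \<phi> \<psi> * outer \<phi> \<phi> = (\<phi> \<bullet>c \<psi>) \<cdot>\<^sub>m outer \<phi> \<phi>"
    using assms by (intro outer_mult) auto
  finally show ?thesis by (simp add: ketbra_eq_outer smult_smult_mat)
qed

lemma pure_kron_sandwich:
  assumes \<phi>: "\<phi> \<in> carrier_vec n" "\<phi> \<bullet>c \<phi> = 1" and \<psi>: "\<psi> \<in> carrier_vec n"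
    and \<sigma>: "\<sigma> \<in> carrier_mat d d"
  shows "kron (ketbra \<phi>) \<sigma> * kron (ketbra \<psi>) \<sigma> * kron (ketbra \<phi>) \<sigma> =
    ((\<psi> \<bullet>c \<phi>) * (\<phi> \<bullet>c \<psi>)) \<cdot>\<^sub>m (kron (ketbra \<phi>) \<sigma> * kron (ketbra \<phi>) \<sigma> * kron (ketbra \<phi>) \<sigma>)"
proof -
  have k: "ketbra \<phi> \<in> carrier_mat n n" "ketbra \<psi> \<in> carrier_mat n n"
    using \<phi> \<psi> ketbra_carrier by (metis carrier_vecD)+
  have "ketbra \<phi> * ketbra \<phi> * ketbra \<phi> = ketbra \<phi>"
    using ketbra_sandwich[of \<phi> n \<phi>] \<phi> by simp
  then show ?thesis
    using ketbra_sandwich[of \<phi> n \<psi>] \<phi> \<psi> kron_sandwich[OF k(1,2) \<sigma>] kron_sandwich[OF k(1,1) \<sigma>]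
    by (simp add: kron_smult)
qed

lemma unitary_conj_mult:
  fixes U A B :: "complex mat"
  assumes U: "U \<in> carrier_mat n n" "mat_adjoint U * U = 1\<^sub>m n"
    and A: "A \<in> carrier_mat n n" and B: "B \<in> carrier_mat n n"
  shows "(U * A * mat_adjoint U) * (U * B * mat_adjoint U) = U * (A * B) * mat_adjoint U"
proof -
  have U': "mat_adjoint U \<in> carrier_mat n n" using U by simp
  have "(U * A * mat_adjoint U) * (U * B * mat_adjoint U) =
      U * (A * (mat_adjoint U * (U * (B * mat_adjoint U))))"
    using U U' A B by (simp add: assoc_mult_mat[of _ n n _ n _ n])
  also have "mat_adjoint U * (U * (B * mat_adjoint U)) = (mat_adjoint U * U) * (B * mat_adjoint U)"
    using assoc_mult_mat[OF U' U(1) mult_carrier_mat[OF B U']] by simp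
  also have "\<dots> = B * mat_adjoint U"
    using U(2) B U' by simp
  also have "U * (A * (B * mat_adjoint U)) = U * (A * B) * mat_adjoint U"
    using U U' A B by (simp add: assoc_mult_mat[of _ n n _ n _ n])
  finally show ?thesis .
qed

lemma unitary_conj_sandwich:
  fixes U K L :: "complex mat"
  assumes U: "U \<in> carrier_mat n n" "mat_adjoint U * U = 1\<^sub>m n"
    and K: "K \<in> carrier_mat n n" and L: "L \<in> carrier_mat n n"
    and KLK: "K * L * K = c \<cdot>\<^sub>m (K * K * K)"
  shows "(U * K * mat_adjoint U) * (U * L * mat_adjoint U) * (U * K * mat_adjoint U) =
    c \<cdot>\<^sub>m ((U * K * mat_adjoint U) * (U * K * mat_adjoint U) * (U * K * mat_adjoint U))"
proof -
  have U': "mat_adjoint U \<in> carrier_mat n n" using U by simp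
  have K3: "K * K * K \<in> carrier_mat n n" using K by simp
  have "(U * K * mat_adjoint U) * (U * L * mat_adjoint U) * (U * K * mat_adjoint U) =
      U * (K * L * K) * mat_adjoint U"
    using unitary_conj_mult[OF U K L] unitary_conj_mult[OF U mult_carrier_mat[OF K L] K] by simp
  also have "\<dots> = c \<cdot>\<^sub>m (U * (K * K * K) * mat_adjoint U)"
    unfolding KLK using mult_smult_distrib[OF U(1) K3] mult_smult_assoc_mat[OF mult_carrier_mat[OF U(1) K3] U']
    by simp
  also have "U * (K * K * K) * mat_adjoint U =
      (U * K * mat_adjoint U) * (U * K * mat_adjoint U) * (U * K * mat_adjoint U)"
    using unitary_conj_mult[OF U K K] unitary_conj_mult[OF U mult_carrier_mat[OF K K] K] by simp
  finally show ?thesis .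
qed

section \<open>Essentially pure sets\<close>

lemma density_op_neq_0: "density_op n \<omega> \<Longrightarrow> \<omega> \<noteq> 0\<^sub>m n n"
  by (auto simp: density_op_def mtrace_def)

lemma essentially_pure_sandwich:
  assumes ep: "essentially_pure n \<M>"
    and \<rho>: "\<rho> \<in> \<M>" "\<rho> \<in> carrier_mat n n" and \<rho>': "\<rho>' \<in> \<M>" "\<rho>' \<in> carrier_mat n n"
  shows "\<exists>c. \<rho> * \<rho>' * \<rho> = c \<cdot>\<^sub>m (\<rho> * \<rho> * \<rho>)"
proof -
  obtain dC dA dB \<sigma> \<omega> U where \<sigma>: "density_op dB \<sigma>" and \<omega>: "density_op dC \<omega>"
    and U: "unitary_op (dA * dB) U"
    and pure: "\<forall>\<rho> \<in> \<M>. \<exists>\<phi> \<in> carrier_vec dA. \<phi> \<bullet>c \<phi> = 1 \<and>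
      kron \<rho> \<omega> = U * kron (ketbra \<phi>) \<sigma> * mat_adjoint U"
    using ep unfolding essentially_pure_def by blast
  obtain \<phi> where \<phi>: "\<phi> \<in> carrier_vec dA" "\<phi> \<bullet>c \<phi> = 1"
    and \<rho>_eq: "kron \<rho> \<omega> = U * kron (ketbra \<phi>) \<sigma> * mat_adjoint U"
    using pure \<rho>(1) by blast
  obtain \<psi> where \<psi>: "\<psi> \<in> carrier_vec dA"
    and \<rho>'_eq: "kron \<rho>' \<omega> = U * kron (ketbra \<psi>) \<sigma> * mat_adjoint U"
    using pure \<rho>'(1) by blast
  have \<sigma>c: "\<sigma> \<in> carrier_mat dB dB" using \<sigma> by (simp add: density_op_def)
  have \<omega>c: "\<omega> \<in> carrier_mat dC dC" and \<omega>h: "mat_adjoint \<omega> = \<omega>" using \<omega> by (simp_all add: density_op_def)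
  have k: "ketbra \<phi> \<in> carrier_mat dA dA" "ketbra \<psi> \<in> carrier_mat dA dA"
    using \<phi> \<psi> ketbra_carrier by (metis carrier_vecD)+
  define c where "c = (\<psi> \<bullet>c \<phi>) * (\<phi> \<bullet>c \<psi>)"
  have U: "U \<in> carrier_mat (dA * dB) (dA * dB)" "mat_adjoint U * U = 1\<^sub>m (dA * dB)"
    using U by (simp_all add: unitary_op_def)
  have "kron (\<rho> * \<rho>' * \<rho>) (\<omega> * \<omega> * \<omega>) = kron \<rho> \<omega> * kron \<rho>' \<omega> * kron \<rho> \<omega>"
    by (rule kron_sandwich[OF \<rho>(2) \<rho>'(2) \<omega>c, symmetric])
  also have "\<dots> = c \<cdot>\<^sub>m (kron \<rho> \<omega> * kron \<rho> \<omega> * kron \<rho> \<omega>)"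
    unfolding \<rho>_eq \<rho>'_eq
    by (rule unitary_conj_sandwich[OF U kron_carrier[OF k(1) \<sigma>c] kron_carrier[OF k(2) \<sigma>c]])
      (unfold c_def, rule pure_kron_sandwich[OF \<phi> \<psi> \<sigma>c])
  also have "kron \<rho> \<omega> * kron \<rho> \<omega> * kron \<rho> \<omega> = kron (\<rho> * \<rho> * \<rho>) (\<omega> * \<omega> * \<omega>)"
    by (rule kron_sandwich[OF \<rho>(2) \<rho>(2) \<omega>c])
  finally have "kron (\<rho> * \<rho>' * \<rho>) (\<omega> * \<omega> * \<omega>) = c \<cdot>\<^sub>m kron (\<rho> * \<rho> * \<rho>) (\<omega> * \<omega> * \<omega>)" .
  moreover have "\<omega> * \<omega> * \<omega> \<noteq> 0\<^sub>m dC dC"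
    using hermitian_cube_neq_0[OF \<omega>c \<omega>h density_op_neq_0[OF \<omega>]] .
  moreover have "\<rho> * \<rho>' * \<rho> \<in> carrier_mat n n" "\<rho> * \<rho> * \<rho> \<in> carrier_mat n n"
    "\<omega> * \<omega> * \<omega> \<in> carrier_mat dC dC"
    using \<rho>(2) \<rho>'(2) \<omega>c by (meson mult_carrier_mat)+
  ultimately have "\<rho> * \<rho>' * \<rho> = c \<cdot>\<^sub>m (\<rho> * \<rho> * \<rho>)"
    using kron_eq_smult_kron_cancel by blast
  then show ?thesis ..
qed

section \<open>Supports and Jordan angles of projection ranges\<close>

definition fixed_space :: "nat \<Rightarrow> complex mat \<Rightarrow> complex vec set" where
  "fixed_space n P = {v \<in> carrier_vec n. P *\<^sub>v v = v}"

lemma supp_eq_fixed_space: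
  fixes \<rho> P A :: "complex mat"
  assumes \<rho>: "\<rho> \<in> carrier_mat n n" and P: "P \<in> carrier_mat n n" and A: "A \<in> carrier_mat n n"
    and herm: "mat_adjoint P = P" and \<rho>P: "\<rho> * P = \<rho>" and A\<rho>: "A * \<rho> = P"
  shows "supp \<rho> = fixed_space n P"
proof (intro equalityI subsetI)
  fix v assume "v \<in> supp \<rho>"
  then have v: "v \<in> carrier_vec n" and orth: "\<And>w. w \<in> mat_kernel \<rho> \<Longrightarrow> v \<bullet>c w = 0"
    unfolding supp_def using \<rho> by auto
  define w where "w = v - P *\<^sub>v v"
  have Pv: "P *\<^sub>v v \<in> carrier_vec n" and w: "w \<in> carrier_vec n" using P v by (simp_all add: w_def)
  have "\<rho> *\<^sub>v w = \<rho> *\<^sub>v v - (\<rho> * P) *\<^sub>v v"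
    unfolding w_def using \<rho> P v by (simp add: mult_minus_distrib_mat_vec assoc_mult_mat_vec)
  then have "\<rho> *\<^sub>v w = 0\<^sub>v n" using \<rho> v \<rho>P by simp
  then have "v \<bullet>c w = 0" using orth \<rho> w by (simp add: mat_kernelI)
  have "P * P = P" using \<rho>P A\<rho> A \<rho> P by (metis assoc_mult_mat)
  then have "P *\<^sub>v w = 0\<^sub>v n"
    unfolding w_def using P v by (simp add: mult_minus_distrib_mat_vec assoc_mult_mat_vec[symmetric])
  then have "(P *\<^sub>v v) \<bullet>c w = 0"
    using mat_adjoint_scalar_prod[OF P v w] herm v by simp
  have "w \<bullet>c w = v \<bullet>c w - (P *\<^sub>v v) \<bullet>c w"
    unfolding w_def using v Pv w by (simp add: minus_scalar_prod_distrib[of _ n])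
  then have "w = 0\<^sub>v n" using \<open>v \<bullet>c w = 0\<close> \<open>(P *\<^sub>v v) \<bullet>c w = 0\<close> w by simp
  have "P *\<^sub>v v = v"
  proof (rule eq_vecI)
    fix i assume i: "i < dim_vec v"
    then have "w $ i = 0" using \<open>w = 0\<^sub>v n\<close> v by simp
    then show "(P *\<^sub>v v) $ i = v $ i" using i v P unfolding w_def by simp
  qed (use P v in simp)
  with v show "v \<in> fixed_space n P" by (simp add: fixed_space_def)
next
  fix v assume "v \<in> fixed_space n P"
  then have v: "v \<in> carrier_vec n" and Pv: "P *\<^sub>v v = v" by (auto simp: fixed_space_def)
  have "v \<bullet>c w = 0" if "w \<in> mat_kernel \<rho>" for w
  proof -
    have w: "w \<in> carrier_vec n" and \<rho>w: "\<rho> *\<^sub>v w = 0\<^sub>v n"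
      using that \<rho> unfolding mat_kernel_def by auto
    have "v \<bullet>c w = v \<bullet>c (mat_adjoint P *\<^sub>v w)"
      using mat_adjoint_scalar_prod[OF P v w] Pv by simp
    also have "mat_adjoint P *\<^sub>v w = A *\<^sub>v (\<rho> *\<^sub>v w)"
      using herm A\<rho> A \<rho> w by (metis assoc_mult_mat_vec)
    also have "\<dots> = 0\<^sub>v n"
      unfolding \<rho>w using A by (intro eq_vecI) auto
    finally show ?thesis using v by simp
  qed
  with v \<rho> show "v \<in> supp \<rho>" by (simp add: supp_def)
qed

lemma mat_of_cols_mult_unit_vec:
  fixes vs :: "complex vec list"
  assumes "set vs \<subseteq> carrier_vec n" "k < length vs"
  shows "mat_of_cols n vs *\<^sub>v unit_vec (length vs) k = vs ! k"
proof (rule eq_vecI)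
  have vk: "vs ! k \<in> carrier_vec n" using assms by auto
  then show "dim_vec (mat_of_cols n vs *\<^sub>v unit_vec (length vs) k) = dim_vec (vs ! k)" by simp
  fix i assume "i < dim_vec (vs ! k)"
  then have "i < n" using vk by simp
  then have "(mat_of_cols n vs *\<^sub>v unit_vec (length vs) k) $ i = row (mat_of_cols n vs) i $ k"
    using assms by simp
  also have "\<dots> = vs ! k $ i" using \<open>i < n\<close> assms by (simp add: mat_of_cols_index)
  finally show "(mat_of_cols n vs *\<^sub>v unit_vec (length vs) k) $ i = vs ! k $ i" .
qed

lemma mat_of_cols_gram_index:
  fixes vs :: "complex vec list"
  assumes "set vs \<subseteq> carrier_vec n" "i < length vs" "j < length vs"
  shows "(mat_adjoint (mat_of_cols n vs) * mat_of_cols n vs) $$ (j, i) = vs ! i \<bullet>c vs ! j"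
proof -
  have "(mat_adjoint (mat_of_cols n vs) * mat_of_cols n vs) $$ (j, i) =
      (\<Sum>k\<in>{0..<n}. cnj (vs ! j $ k) * vs ! i $ k)"
    using assms by (simp add: scalar_prod_def mat_of_cols_index)
  also have "\<dots> = vs ! i \<bullet>c vs ! j"
    using assms(1) nth_mem[OF assms(3)] by (auto simp: scalar_prod_def mult.commute carrier_vecD)
  finally show ?thesis .
qed

lemma is_onb_fixed_spaceI:
  fixes n :: nat and vs :: "complex vec list"
  defines "Q \<equiv> mat_of_cols n vs"
  assumes vs: "set vs \<subseteq> carrier_vec n"
    and QQ: "mat_adjoint Q * Q = 1\<^sub>m (length vs)" and QQ': "Q * mat_adjoint Q = P"
  shows "is_onb n (fixed_space n P) vs"
proof -
  have Q: "Q \<in> carrier_mat n (length vs)" and Q': "mat_adjoint Q \<in> carrier_mat (length vs) n"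
    by (simp_all add: Q_def)
  have "P *\<^sub>v v = v" if "v \<in> set vs" for v
  proof -
    from that obtain k where k: "k < length vs" "v = vs ! k" unfolding in_set_conv_nth by blast
    define u :: "complex vec" where "u = unit_vec (length vs) k"
    have u: "u \<in> carrier_vec (length vs)" by (simp add: u_def)
    have v: "v = Q *\<^sub>v u"
      using mat_of_cols_mult_unit_vec[OF vs k(1)] k(2) by (simp add: Q_def u_def)
    have "P *\<^sub>v v = Q *\<^sub>v (mat_adjoint Q *\<^sub>v (Q *\<^sub>v u))"
      unfolding v QQ'[symmetric] by (rule assoc_mult_mat_vec[OF Q Q' mult_mat_vec_carrier[OF Q u]])
    also have "mat_adjoint Q *\<^sub>v (Q *\<^sub>v u) = u"
      using assoc_mult_mat_vec[OF Q' Q u, symmetric] QQ u by simp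
    finally show ?thesis using v by simp
  qed
  then have "set vs \<subseteq> fixed_space n P"
    using vs by (auto simp: fixed_space_def)
  moreover have "\<forall>i < length vs. \<forall>j < length vs. vs ! i \<bullet>c vs ! j = (if i = j then 1 else 0)"
  proof (intro allI impI)
    fix i j assume ij: "i < length vs" "j < length vs"
    have "vs ! i \<bullet>c vs ! j = (mat_adjoint Q * Q) $$ (j, i)"
      unfolding Q_def by (rule mat_of_cols_gram_index[OF vs ij, symmetric])
    then show "vs ! i \<bullet>c vs ! j = (if i = j then 1 else 0)" using QQ ij by simp
  qed
  moreover have "\<exists>c \<in> carrier_vec (length vs). v = Q *\<^sub>v c" if "v \<in> fixed_space n P" for v
  proof
    have v: "v \<in> carrier_vec n" "P *\<^sub>v v = v" using that by (simp_all add: fixed_space_def)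
    show "mat_adjoint Q *\<^sub>v v \<in> carrier_vec (length vs)" using Q' v(1) by simp
    show "v = Q *\<^sub>v (mat_adjoint Q *\<^sub>v v)"
      using v QQ' assoc_mult_mat_vec[OF Q Q' v(1)] by simp
  qed
  moreover have "fixed_space n P \<subseteq> carrier_vec n" by (auto simp: fixed_space_def)
  ultimately show ?thesis unfolding is_onb_def Q_def by blast
qed

lemma is_onb_fixed_spaceD:
  fixes n :: nat and vs :: "complex vec list" and P :: "complex mat"
  defines "Q \<equiv> mat_of_cols n vs"
  assumes P: "P \<in> carrier_mat n n" and herm: "mat_adjoint P = P" and idem: "P * P = P"
    and onb: "is_onb n (fixed_space n P) vs"
  shows "mat_adjoint Q * Q = 1\<^sub>m (length vs)" "Q * mat_adjoint Q = P"
proof -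
  have Q: "Q \<in> carrier_mat n (length vs)" and Q': "mat_adjoint Q \<in> carrier_mat (length vs) n"
    by (simp_all add: Q_def)
  have vs: "set vs \<subseteq> fixed_space n P"
    and orth: "\<forall>i < length vs. \<forall>j < length vs. vs ! i \<bullet>c vs ! j = (if i = j then 1 else 0)"
    and span: "\<And>v. v \<in> fixed_space n P \<Longrightarrow> \<exists>c \<in> carrier_vec (length vs). v = Q *\<^sub>v c"
    using onb unfolding is_onb_def Q_def by auto
  have vs_carrier: "set vs \<subseteq> carrier_vec n" using vs by (auto simp: fixed_space_def)
  show QQ: "mat_adjoint Q * Q = 1\<^sub>m (length vs)"
  proof (rule eq_matI)
    fix j i assume "j < dim_row (1\<^sub>m (length vs) :: complex mat)" "i < dim_col (1\<^sub>m (length vs) :: complex mat)"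
    then have ij: "i < length vs" "j < length vs" by auto
    show "(mat_adjoint Q * Q) $$ (j, i) = 1\<^sub>m (length vs) $$ (j, i)"
      using mat_of_cols_gram_index[OF vs_carrier ij] orth ij by (auto simp: Q_def)
  qed (simp_all add: Q_def)
  have PQ: "P * Q = Q"
  proof (rule eq_matI)
    fix i k assume "i < dim_row Q" "k < dim_col Q"
    then have i: "i < n" and k: "k < length vs" by (auto simp: Q_def)
    have "P *\<^sub>v vs ! k = vs ! k" using vs nth_mem[OF k] by (auto simp: fixed_space_def)
    moreover have "col Q k = vs ! k" using k vs_carrier nth_mem[OF k] unfolding Q_def by (blast intro: col_mat_of_cols)
    moreover have "(P * Q) $$ (i, k) = (P *\<^sub>v col Q k) $ i" using P Q i k by simp
    ultimately show "(P * Q) $$ (i, k) = Q $$ (i, k)"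
      using i k by (simp add: Q_def mat_of_cols_index)
  qed (use P Q in auto)
  have Q'P: "mat_adjoint Q * P = mat_adjoint Q"
    using mat_adjoint_mult[OF P Q] PQ herm by simp
  show "Q * mat_adjoint Q = P"
  proof (rule eq_mat_on_vecI[OF mult_carrier_mat[OF Q Q'] P])
    fix v :: "complex vec" assume v: "v \<in> carrier_vec n"
    have "P *\<^sub>v (P *\<^sub>v v) = P *\<^sub>v v" using idem P v by (metis assoc_mult_mat_vec)
    with P v obtain c where c: "c \<in> carrier_vec (length vs)" "P *\<^sub>v v = Q *\<^sub>v c"
      using span[of "P *\<^sub>v v"] by (auto simp: fixed_space_def)
    have "(Q * mat_adjoint Q) *\<^sub>v v = Q *\<^sub>v ((mat_adjoint Q * P) *\<^sub>v v)"
      using assoc_mult_mat_vec[OF Q Q' v] Q'P by simp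
    also have "(mat_adjoint Q * P) *\<^sub>v v = (mat_adjoint Q * Q) *\<^sub>v c"
      using assoc_mult_mat_vec[OF Q' P v] assoc_mult_mat_vec[OF Q' Q c(1)] c(2) by simp
    finally show "(Q * mat_adjoint Q) *\<^sub>v v = P *\<^sub>v v" using QQ c by simp
  qed
qed

lemma cross_gram_eq_smult_one_mat:
  fixes Q1 Q2 P1 P2 :: "complex mat"
  assumes Q1: "Q1 \<in> carrier_mat n k" and Q2: "Q2 \<in> carrier_mat n l"
    and Q1Q1: "mat_adjoint Q1 * Q1 = 1\<^sub>m k"
    and P1: "Q1 * mat_adjoint Q1 = P1" and P2: "Q2 * mat_adjoint Q2 = P2"
    and P121: "P1 * P2 * P1 = c \<cdot>\<^sub>m P1"
  shows "(mat_adjoint Q1 * Q2) * mat_adjoint (mat_adjoint Q1 * Q2) = c \<cdot>\<^sub>m 1\<^sub>m k"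
proof -
  have Q1': "mat_adjoint Q1 \<in> carrier_mat k n" and Q2': "mat_adjoint Q2 \<in> carrier_mat l n"
    using Q1 Q2 by simp_all
  have P1c: "P1 \<in> carrier_mat n n" and P2c: "P2 \<in> carrier_mat n n"
    using P1 P2 Q1 Q2 by auto
  have Q1'P1: "mat_adjoint Q1 * P1 = mat_adjoint Q1"
    unfolding P1[symmetric] using assoc_mult_mat[OF Q1' Q1 Q1'] Q1Q1 left_mult_one_mat[OF Q1'] by simp
  have P1Q1: "P1 * Q1 = Q1"
    unfolding P1[symmetric] using assoc_mult_mat[OF Q1 Q1' Q1] Q1Q1 Q1 by simp
  have "(mat_adjoint Q1 * Q2) * mat_adjoint (mat_adjoint Q1 * Q2) = (mat_adjoint Q1 * Q2) * (mat_adjoint Q2 * Q1)"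
    using mat_adjoint_mult[OF Q1' Q2] by simp
  also have "\<dots> = mat_adjoint Q1 * ((Q2 * mat_adjoint Q2) * Q1)"
    using assoc_mult_mat[OF Q1' Q2 mult_carrier_mat[OF Q2' Q1]] assoc_mult_mat[OF Q2 Q2' Q1] by simp
  also have "\<dots> = (mat_adjoint Q1 * P1) * (P2 * (P1 * Q1))"
    unfolding P2 Q1'P1 P1Q1 ..
  also have "\<dots> = mat_adjoint Q1 * (P1 * (P2 * (P1 * Q1)))"
    by (rule assoc_mult_mat[OF Q1' P1c mult_carrier_mat[OF P2c mult_carrier_mat[OF P1c Q1]]])
  also have "\<dots> = mat_adjoint Q1 * ((P1 * P2 * P1) * Q1)"
    using assoc_mult_mat[OF mult_carrier_mat[OF P1c P2c] P1c Q1] assoc_mult_mat[OF P1c P2c mult_carrier_mat[OF P1c Q1]]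
    by simp
  also have "\<dots> = c \<cdot>\<^sub>m (mat_adjoint Q1 * Q1)"
    unfolding P121 using mult_smult_assoc_mat[OF P1c Q1] mult_smult_distrib[OF Q1' mult_carrier_mat[OF P1c Q1]] P1Q1
    by simp
  finally show ?thesis using Q1Q1 by simp
qed

lemma eigenvalue_smult_one_mat_iff:
  assumes "0 < m"
  shows "eigenvalue (c \<cdot>\<^sub>m 1\<^sub>m m :: 'a :: idom mat) e \<longleftrightarrow> e = c"
proof -
  have mult: "(c \<cdot>\<^sub>m 1\<^sub>m m) *\<^sub>v v = c \<cdot>\<^sub>v v" if "v \<in> carrier_vec m" for v :: "'a vec"
    using that by (intro eq_vecI) (auto simp: smult_scalar_prod_distrib[of _ m])
  show ?thesis
  proof
    assume "eigenvalue (c \<cdot>\<^sub>m 1\<^sub>m m) e"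
    then obtain v where v: "v \<in> carrier_vec m" "v \<noteq> 0\<^sub>v m" "(c \<cdot>\<^sub>m 1\<^sub>m m) *\<^sub>v v = e \<cdot>\<^sub>v v"
      unfolding eigenvalue_def eigenvector_def by auto
    have "\<exists>i < m. v $ i \<noteq> 0"
    proof (rule ccontr)
      assume "\<not> ?thesis"
      then have "v = 0\<^sub>v m" using v(1) by (intro eq_vecI) auto
      with v(2) show False ..
    qed
    then obtain i where i: "i < m" "v $ i \<noteq> 0" by blast
    have "c * v $ i = e * v $ i"
      using arg_cong[OF v(3), of "\<lambda>w. w $ i"] mult[OF v(1)] i v(1) by simp
    then show "e = c" using i by simp
  next
    assume "e = c"
    then show "eigenvalue (c \<cdot>\<^sub>m 1\<^sub>m m) e"
      unfolding eigenvalue_def eigenvector_def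
      using mult[of "unit_vec m 0"] assms by (intro exI[of _ "unit_vec m 0"]) auto
  qed
qed

lemma jordan_angles_fixed_spaces:
  fixes P1 P2 :: "complex mat"
  assumes P1: "P1 \<in> carrier_mat n n" "mat_adjoint P1 = P1" "P1 * P1 = P1" "P1 \<noteq> 0\<^sub>m n n"
    and P2: "P2 \<in> carrier_mat n n" "mat_adjoint P2 = P2" "P2 * P2 = P2" "P2 \<noteq> 0\<^sub>m n n"
    and P121: "P1 * P2 * P1 = c \<cdot>\<^sub>m P1" and P212: "P2 * P1 * P2 = c \<cdot>\<^sub>m P2"
    and onb1: "\<exists>vs. is_onb n (fixed_space n P1) vs" and onb2: "\<exists>vs. is_onb n (fixed_space n P2) vs"
  shows "jordan_angles n (fixed_space n P1) (fixed_space n P2) = {arccos (sqrt (Re c))}"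
proof -
  define vs1 where "vs1 = (SOME vs. is_onb n (fixed_space n P1) vs)"
  define vs2 where "vs2 = (SOME vs. is_onb n (fixed_space n P2) vs)"
  define Q1 where "Q1 = mat_of_cols n vs1"
  define Q2 where "Q2 = mat_of_cols n vs2"
  note Q1Q1 = is_onb_fixed_spaceD[OF P1(1-3) someI_ex[OF onb1], folded vs1_def Q1_def]
  note Q2Q2 = is_onb_fixed_spaceD[OF P2(1-3) someI_ex[OF onb2], folded vs2_def Q2_def]
  have Q1: "Q1 \<in> carrier_mat n (length vs1)" and Q2: "Q2 \<in> carrier_mat n (length vs2)"
    by (simp_all add: Q1_def Q2_def)
  have nonempty: "0 < length vs" if "mat_of_cols n vs * mat_adjoint (mat_of_cols n vs) = P" "P \<noteq> 0\<^sub>m n n"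
    for vs :: "complex vec list" and P
  proof (rule ccontr)
    assume "\<not> 0 < length vs"
    then have "mat_of_cols n vs * mat_adjoint (mat_of_cols n vs) = 0\<^sub>m n n"
      by (intro eq_matI) (auto simp: scalar_prod_def)
    with that show False by simp
  qed
  have k: "0 < length vs1" using nonempty Q1Q1(2) P1(4) by (simp add: Q1_def)
  have l: "0 < length vs2" using nonempty Q2Q2(2) P2(4) by (simp add: Q2_def)
  have G: "(mat_adjoint Q1 * Q2) * mat_adjoint (mat_adjoint Q1 * Q2) = c \<cdot>\<^sub>m 1\<^sub>m (length vs1)"
    by (rule cross_gram_eq_smult_one_mat[OF Q1 Q2 Q1Q1 Q2Q2(2) P121])
  have "(mat_adjoint Q2 * Q1) * mat_adjoint (mat_adjoint Q2 * Q1) = c \<cdot>\<^sub>m 1\<^sub>m (length vs2)"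
    by (rule cross_gram_eq_smult_one_mat[OF Q2 Q1 Q2Q2 Q1Q1(2) P212])
  then have G': "mat_adjoint (mat_adjoint Q1 * Q2) * (mat_adjoint Q1 * Q2) = c \<cdot>\<^sub>m 1\<^sub>m (length vs2)"
    using mat_adjoint_mult[OF mat_adjoint_carrier[OF Q1] Q2] mat_adjoint_mult[OF mat_adjoint_carrier[OF Q2] Q1]
    by simp
  have angles: "{arccos (sqrt (Re e)) |e. eigenvalue (c \<cdot>\<^sub>m 1\<^sub>m m) e} = {arccos (sqrt (Re c))}"
    if "0 < m" for m
    using eigenvalue_smult_one_mat_iff[OF that] by auto
  show ?thesis
    unfolding jordan_angles_def Let_def vs1_def[symmetric] vs2_def[symmetric] Q1_def[symmetric] Q2_def[symmetric]
    using G G' angles[OF k] angles[OF l] Q1 Q2 by auto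
qed

section \<open>The two states\<close>

lemma less_4_cases: "(i :: nat) < 4 \<longleftrightarrow> i = 0 \<or> i = 1 \<or> i = 2 \<or> i = 3"
  by auto

lemma less_2_cases: "(i :: nat) < 2 \<longleftrightarrow> i = 0 \<or> i = 1"
  by auto

lemma sum_lessThan_4: "(\<Sum>i\<in>{0..<4 :: nat}. f i) = f 0 + f 1 + f 2 + f 3"
  by (simp add: eval_nat_numeral)

lemma mult_mat_4:
  "A \<in> carrier_mat 4 4 \<Longrightarrow> B \<in> carrier_mat 4 4 \<Longrightarrow>
   A * B = mat 4 4 (\<lambda>(i, j). A $$ (i, 0) * B $$ (0, j) + A $$ (i, 1) * B $$ (1, j)
     + A $$ (i, 2) * B $$ (2, j) + A $$ (i, 3) * B $$ (3, j))"
  by (rule eq_matI) (auto simp: scalar_prod_def sum_lessThan_4)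

lemma nu_plus_eq: "nu_plus = vec 4 (\<lambda>i. 1/2)"
  by (rule eq_vecI) (auto simp: nu_plus_def less_4_cases vec_of_list_index simp del: vec_of_list_Cons)

lemma nu_minus_eq: "nu_minus = vec 4 (\<lambda>i. if even i then -1/2 else 1/2)"
  by (rule eq_vecI) (auto simp: nu_minus_def less_4_cases vec_of_list_index simp del: vec_of_list_Cons)

text \<open>\<open>diag01_mat a b = a |0><0| + b |1><1|\<close> and \<open>parity_mat a b = a |\<nu>\<^sup>+><\<nu>\<^sup>+| + b |\<nu>\<^sup>-><\<nu>\<^sup>-|\<close>.\<close>

definition diag01_mat :: "complex \<Rightarrow> complex \<Rightarrow> complex mat" where
  "diag01_mat a b = mat 4 4 (\<lambda>(i, j). if i = j \<and> i = 0 then a else if i = j \<and> i = 1 then b else 0)"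

definition parity_mat :: "complex \<Rightarrow> complex \<Rightarrow> complex mat" where
  "parity_mat a b = mat 4 4 (\<lambda>(i, j). (a + (if even i = even j then 1 else -1) * b) / 4)"

lemma diag01_mat_carrier [simp]: "diag01_mat a b \<in> carrier_mat 4 4"
  by (simp add: diag01_mat_def)

lemma parity_mat_carrier [simp]: "parity_mat a b \<in> carrier_mat 4 4"
  by (simp add: parity_mat_def)

lemma diag01_mat_mult: "diag01_mat a b * diag01_mat x y = diag01_mat (a * x) (b * y)"
  by (simp add: diag01_mat_def mult_mat_4) (rule eq_matI, auto simp: less_4_cases)

lemma parity_mat_mult: "parity_mat a b * parity_mat x y = parity_mat (a * x) (b * y)"
  by (simp add: parity_mat_def mult_mat_4) (rule eq_matI, auto simp: less_4_cases field_simps)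

lemma diag01_mat_hermitian: "mat_adjoint (diag01_mat 1 1) = diag01_mat 1 1"
  by (rule eq_matI) (auto simp: diag01_mat_def)

lemma parity_mat_hermitian: "mat_adjoint (parity_mat 1 1) = parity_mat 1 1"
  by (rule eq_matI) (auto simp: parity_mat_def)

lemma diag01_mat_neq_0: "diag01_mat 1 1 \<noteq> 0\<^sub>m 4 4"
proof
  assume "diag01_mat 1 1 = 0\<^sub>m 4 4"
  then have "diag01_mat 1 1 $$ (0, 0) = 0\<^sub>m 4 4 $$ (0, 0)" by simp
  then show False by (simp add: diag01_mat_def)
qed

lemma parity_mat_neq_0: "parity_mat 1 1 \<noteq> 0\<^sub>m 4 4"
proof
  assume "parity_mat 1 1 = 0\<^sub>m 4 4"
  then have "parity_mat 1 1 $$ (0, 0) = 0\<^sub>m 4 4 $$ (0, 0)" by simp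
  then show False by (simp add: parity_mat_def)
qed

lemma diag01_parity_diag01: "diag01_mat 1 1 * parity_mat 1 1 * diag01_mat 1 1 = (1/2) \<cdot>\<^sub>m diag01_mat 1 1"
  by (simp add: diag01_mat_def parity_mat_def mult_mat_4) (rule eq_matI, auto simp: less_4_cases)

lemma parity_diag01_parity: "parity_mat 1 1 * diag01_mat 1 1 * parity_mat 1 1 = (1/2) \<cdot>\<^sub>m parity_mat 1 1"
  by (simp add: diag01_mat_def parity_mat_def mult_mat_4) (rule eq_matI, auto simp: less_4_cases)

lemma rho1_eq: "rho1 p = diag01_mat p (1 - p)"
  by (auto simp: rho1_def diag01_mat_def ketbra_def less_4_cases)

lemma rho2_eq: "rho2 p = parity_mat p (1 - p)"
  by (rule eq_matI) (auto simp: rho2_def parity_mat_def ketbra_def nu_plus_eq nu_minus_eq less_4_cases field_simps)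

lemma rho1_carrier [simp]: "rho1 p \<in> carrier_mat 4 4"
  by (simp add: rho1_eq)

lemma rho2_carrier [simp]: "rho2 p \<in> carrier_mat 4 4"
  by (simp add: rho2_eq)

lemma supp_rho1:
  assumes "0 < p" "p < 1"
  shows "supp (rho1 p) = fixed_space 4 (diag01_mat 1 1)"
proof (rule supp_eq_fixed_space)
  have "complex_of_real p \<noteq> 0" "complex_of_real (1 - p) \<noteq> 0" using assms by auto
  then show "diag01_mat (1 / p) (1 / (1 - p)) * rho1 p = diag01_mat 1 1"
    by (simp add: rho1_eq diag01_mat_mult)
qed (simp_all add: rho1_eq diag01_mat_mult diag01_mat_hermitian)

lemma supp_rho2:
  assumes "0 < p" "p < 1"
  shows "supp (rho2 p) = fixed_space 4 (parity_mat 1 1)"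
proof (rule supp_eq_fixed_space)
  have "complex_of_real p \<noteq> 0" "complex_of_real (1 - p) \<noteq> 0" using assms by auto
  then show "parity_mat (1 / p) (1 / (1 - p)) * rho2 p = parity_mat 1 1"
    by (simp add: rho2_eq parity_mat_mult)
qed (simp_all add: rho2_eq parity_mat_mult parity_mat_hermitian)

definition basis01 :: "complex vec list" where
  "basis01 = [unit_vec 4 0, unit_vec 4 1]"

definition basis_nu :: "complex vec list" where
  "basis_nu = [nu_plus, nu_minus]"

lemma is_onb_basis01: "is_onb 4 (fixed_space 4 (diag01_mat 1 1)) basis01"
proof (rule is_onb_fixed_spaceI)
  have Q: "mat_of_cols 4 basis01 = mat 4 2 (\<lambda>(i, j). if i = j then 1 else 0)"
    by (rule eq_matI) (auto simp: basis01_def mat_of_cols_def less_2_cases)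
  show "mat_adjoint (mat_of_cols 4 basis01) * mat_of_cols 4 basis01 = 1\<^sub>m (length basis01)"
    unfolding Q by (rule eq_matI) (auto simp: basis01_def scalar_prod_def sum_lessThan_4 less_2_cases numeral_2_eq_2[symmetric])
  show "mat_of_cols 4 basis01 * mat_adjoint (mat_of_cols 4 basis01) = diag01_mat 1 1"
    unfolding Q diag01_mat_def by (rule eq_matI) (auto simp: scalar_prod_def less_4_cases eval_nat_numeral)
qed (auto simp: basis01_def)

lemma is_onb_basis_nu: "is_onb 4 (fixed_space 4 (parity_mat 1 1)) basis_nu"
proof (rule is_onb_fixed_spaceI)
  have Q: "mat_of_cols 4 basis_nu = mat 4 2 (\<lambda>(i, j). if j = 0 then 1/2 else if even i then -1/2 else 1/2)"
    by (rule eq_matI) (auto simp: basis_nu_def mat_of_cols_def less_2_cases nu_plus_eq nu_minus_eq)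
  show "mat_adjoint (mat_of_cols 4 basis_nu) * mat_of_cols 4 basis_nu = 1\<^sub>m (length basis_nu)"
    unfolding Q by (rule eq_matI) (auto simp: basis_nu_def scalar_prod_def sum_lessThan_4 less_2_cases numeral_2_eq_2[symmetric])
  show "mat_of_cols 4 basis_nu * mat_adjoint (mat_of_cols 4 basis_nu) = parity_mat 1 1"
    unfolding Q parity_mat_def by (rule eq_matI) (auto simp: scalar_prod_def less_4_cases eval_nat_numeral)
qed (auto simp: basis_nu_def nu_plus_eq nu_minus_eq)

lemma parity_mat_similar_diag01_mat: "similar_mat (parity_mat a b) (diag01_mat a b)"
proof -
  \<comment> \<open>the first two columns of \<open>V\<close> are \<open>\<nu>\<^sup>+\<close> and \<open>\<nu>\<^sup>-\<close>\<close>
  define V :: "complex mat" where "V = mat 4 4 (\<lambda>(i, j).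
    [[1/2, -1/2, 1, 0], [1/2, 1/2, 0, 1], [1/2, -1/2, -1, 0], [1/2, 1/2, 0, -1]] ! i ! j)"
  define W :: "complex mat" where "W = mat 4 4 (\<lambda>(i, j).
    [[1/2, 1/2, 1/2, 1/2], [-1/2, 1/2, -1/2, 1/2], [1/2, 0, -1/2, 0], [0, 1/2, 0, -1/2]] ! i ! j)"
  have "similar_mat_wit (parity_mat a b) (diag01_mat a b) V W"
  proof (rule similar_mat_witI)
    show "V * W = 1\<^sub>m 4" "W * V = 1\<^sub>m 4"
      by (simp_all add: V_def W_def mult_mat_4) (rule eq_matI, auto simp: less_4_cases)+
    show "parity_mat a b = V * diag01_mat a b * W"
      by (simp add: V_def W_def parity_mat_def diag01_mat_def mult_mat_4)
        (rule eq_matI, auto simp: less_4_cases field_simps)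
  qed (simp_all add: V_def W_def )
  then show ?thesis unfolding similar_mat_def by blast
qed

lemma diag01_parity_diag01_index:
  "(diag01_mat a b * parity_mat x y * diag01_mat a b) $$ (0, 1) = a * b * (x - y) / 4"
  by (simp add: diag01_mat_def parity_mat_def mult_mat_4 field_simps)

lemma diag01_cube_index: "(diag01_mat a b * diag01_mat a b * diag01_mat a b) $$ (0, 1) = 0"
  unfolding diag01_mat_mult by (simp add: diag01_mat_def)

lemma jordan_angles_supp_rho1_rho2:
  assumes "0 < p" "p < 1"
  shows "jordan_angles 4 (supp (rho1 p)) (supp (rho2 p)) = {pi / 4}"
proof -
  have "sqrt (Re (1/2)) = cos (pi / 4)"
    by (simp add: cos_45 real_sqrt_divide field_simps)
  then have "pi / 4 = arccos (sqrt (Re (1/2)))"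
    by (simp add: arccos_cos)
  also have "{\<dots>} = jordan_angles 4 (fixed_space 4 (diag01_mat 1 1)) (fixed_space 4 (parity_mat 1 1))"
    by (rule jordan_angles_fixed_spaces[symmetric])
      (use is_onb_basis01 is_onb_basis_nu in \<open>auto simp: diag01_mat_mult parity_mat_mult diag01_mat_hermitian
        parity_mat_hermitian diag01_mat_neq_0 parity_mat_neq_0 diag01_parity_diag01 parity_diag01_parity\<close>)
  finally show ?thesis
    unfolding supp_rho1[OF assms] supp_rho2[OF assms] ..
qed

lemma not_essentially_pure_rho1_rho2:
  assumes "0 < p" "p < 1" "p \<noteq> 1/2"
  shows "\<not> essentially_pure 4 {rho1 p, rho2 p}"
proof
  assume "essentially_pure 4 {rho1 p, rho2 p}"
  then obtain c where "rho1 p * rho2 p * rho1 p = c \<cdot>\<^sub>m (rho1 p * rho1 p * rho1 p)"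
    using essentially_pure_sandwich[of 4 _ "rho1 p" "rho2 p"] by auto
  then have "(rho1 p * rho2 p * rho1 p) $$ (0, 1) = c * (rho1 p * rho1 p * rho1 p) $$ (0, 1)"
    by (simp add: carrier_matD[OF rho1_carrier])
  moreover have "(rho1 p * rho1 p * rho1 p) $$ (0, 1) = 0"
    unfolding rho1_eq by (rule diag01_cube_index)
  moreover have "(rho1 p * rho2 p * rho1 p) $$ (0, 1) = complex_of_real (p * (1 - p) * (2 * p - 1) / 4)"
    unfolding rho1_eq rho2_eq diag01_parity_diag01_index by simp
  ultimately have "complex_of_real (p * (1 - p) * (2 * p - 1) / 4) = 0"
    by (metis mult_zero_right)
  then have "p * (1 - p) * (2 * p - 1) / 4 = 0"
    by (rule of_real_eq_0_iff[THEN iffD1])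
  with assms show False by simp
qed

theorem mainTheorem9:
  fixes p :: real
  assumes "0 < p" and "p < 1/2"
  shows "spectrum (rho1 p) = spectrum (rho2 p) \<and> char_poly (rho1 p) = char_poly (rho2 p)
     \<and> (\<exists>\<theta>. jordan_angles 4 (supp (rho1 p)) (supp (rho2 p)) = {\<theta>})
     \<and> \<not> essentially_pure 4 {rho1 p, rho2 p}"
proof (intro conjI)
  have p: "0 < p" "p < 1" "p \<noteq> 1/2" using assms by simp_all
  have "similar_mat (rho2 p) (rho1 p)"
    unfolding rho1_eq rho2_eq by (rule parity_mat_similar_diag01_mat)
  then show char_poly: "char_poly (rho1 p) = char_poly (rho2 p)"
    by (simp add: char_poly_similar)
  then show "spectrum (rho1 p) = spectrum (rho2 p)"
    by (simp add: spectrum_root_char_poly[OF rho1_carrier] spectrum_root_char_poly[OF rho2_carrier])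
  show "\<exists>\<theta>. jordan_angles 4 (supp (rho1 p)) (supp (rho2 p)) = {\<theta>}"
    using jordan_angles_supp_rho1_rho2[OF p(1,2)] by blast
  show "\<not> essentially_pure 4 {rho1 p, rho2 p}"
    using not_essentially_pure_rho1_rho2[OF p] .
qed

end
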